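(* Let $G=(V,E)$ be a finite planar embedded graph, $\mathbf{p}$ a packing of $G$, and $V=V^+\sqcup V^-\sqcup V^=\sqcup V^0$ a partition. Then $\mathbf{p}$ is second order rigid if and only if every nontrivial proper infinitesimal flex $\mathbf{p}'$ is blocked by some equilibrium stress $\omega$.
   Context: A packing of $G=(V,E)$, $V=\{1,\dots,n\}$, is $\mathbf{p}=(x_1,y_1,r_1,\dots,x_n,y_n,r_n)\in\mathbb{R}^{3n}$, all $r_i>0$, with $(r_i+r_j)^2=(x_i-x_j)^2+(y_i-y_j)^2$ for all $(i,j)\in E$ and the neighbors of each vertex in the same counterclockwise order as in the embedding; $\mathbf{p}_i=(x_i,y_i)$. Partition: $V^+$ (radius may increase or stay), $V^-$ (may decrease or stay), $V^=$ (fixed), $V^0$ (free). An infinitesimal flex is $\mathbf{p}'$ with $(\mathbf{p}_i-\mathbf{p}_j)\cdot(\mathbf{p}_i'-\mathbf{p}_j')=(r_i+r_j)(r_i'+r_j')$ for all edges; proper if $r_i'\ge 0$ on $V^+$, $\le0$ on $V^-$, $=0$ on $V^=$; trivial if it is the derivative of a family of rigid motions (rotations/translations of centers, radii unchanged). For proper $\mathbf{p}'$, the modified partition is $\tilde V^+=\{i\in V^+:r_i'=0\}$, $\tilde V^-=\{i\in V^-:r_i'=0\}$, $\tilde V^==V^=$, $\tilde V^0$ the rest. $\mathbf{p}'$ is extendable if there is $\mathbf{p}''\in\mathbb{R}^{3n}$ with $(\mathbf{p}_i-\mathbf{p}_j)\cdot(\mathbf{p}_i''-\mathbf{p}_j'')-(r_i+r_j)(r_i''+r_j'')=(r_i'+r_j')^2-(\mathbf{p}_i'-\mathbf{p}_j')\cdot(\mathbf{p}_i'-\mathbf{p}_j')$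 for all $(i,j)\in E$, and $r_i''\ge0$ on $\tilde V^+$, $\le 0$ on $\tilde V^-$, $=0$ on $\tilde V^=$. $\mathbf{p}$ is second order rigid if no nontrivial proper infinitesimal flex is extendable. A stress $\omega:E\to\mathbb{R}$ is an equilibrium stress if $\sum_{j:(i,j)\in E}\omega_{ij}(\mathbf{p}_i-\mathbf{p}_j)=0$ for all $i$; its radial force sum is $\omega_i=\sum_{j:(i,j)\in E}\omega_{ij}(r_i+r_j)$. An equilibrium stress $\omega$ blocks $\mathbf{p}'$ if $\omega_i\ge 0$ for $i\in\tilde V^-$, $\omega_i\le0$ for $i\in\tilde V^+$, $\omega_i=0$ for $i\in\tilde V^0$, and $\sum_{(i,j)\in E}\omega_{ij}[(\mathbf{p}_i'-\mathbf{p}_j')\cdot(\mathbf{p}_i'-\mathbf{p}_j')-(r_i'+r_j')^2]>0$. *)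

theory Defs
  imports "HOL-Analysis.Analysis"
begin

(* Vertices are {..<n}.  Undirected edges are stored once, as pairs (i,j) with i < j. *)
definition simple_graph :: "nat \<Rightarrow> (nat \<times> nat) set \<Rightarrow> bool" where
  "simple_graph n E \<longleftrightarrow> E \<subseteq> {(i,j). i < j \<and> j < n}"

definition adj :: "(nat \<times> nat) set \<Rightarrow> nat \<Rightarrow> nat \<Rightarrow> bool" where
  "adj E i j \<longleftrightarrow> (i,j) \<in> E \<or> (j,i) \<in> E"

(* combinatorial embedding: rotation system, rot i = neighbours of i in counterclockwise order *)
definition rotation_system :: "nat \<Rightarrow> (nat \<times> nat) set \<Rightarrow> (nat \<Rightarrow> nat list) \<Rightarrow> bool" where
  "rotation_system n E rot \<longleftrightarrow>
     (\<forall>i<n. distinct (rot i) \<and> set (rot i) = {j. adj E i j})"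

definition rot_next :: "nat list \<Rightarrow> nat \<Rightarrow> nat" where
  "rot_next xs a = xs ! (((THE k. k < length xs \<and> xs ! k = a) + 1) mod length xs)"

definition face_succ :: "(nat \<Rightarrow> nat list) \<Rightarrow> nat \<times> nat \<Rightarrow> nat \<times> nat" where
  "face_succ rot d = (snd d, rot_next (rot (snd d)) (fst d))"

definition darts :: "(nat \<times> nat) set \<Rightarrow> (nat \<times> nat) set" where
  "darts E = {(i,j). adj E i j}"

(* number of faces of the embedding = number of orbits of the face permutation on darts *)
definition num_faces :: "(nat \<times> nat) set \<Rightarrow> (nat \<Rightarrow> nat list) \<Rightarrow> nat" where
  "num_faces E rot =
     card ((\<lambda>d. {e \<in> darts E. \<exists>m. (face_succ rot ^^ m) d = e}) ` darts E)"

definition component :: "nat \<Rightarrow> (nat \<times> nat) set \<Rightarrow> nat \<Rightarrow> nat set" where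
  "component n E i = {j. j < n \<and> (i,j) \<in> (darts E)\<^sup>*}"

definition num_edge_components :: "nat \<Rightarrow> (nat \<times> nat) set \<Rightarrow> nat" where
  "num_edge_components n E = card {component n E i | i. i < n \<and> (\<exists>j. adj E i j)}"

definition num_isolated :: "nat \<Rightarrow> (nat \<times> nat) set \<Rightarrow> nat" where
  "num_isolated n E = card {i. i < n \<and> \<not> (\<exists>j. adj E i j)}"

(* planar (genus 0) embedding: Euler's formula V - E + F = 2 on every component
   (isolated vertices have no darts, hence are counted separately) *)
definition planar_embedding :: "nat \<Rightarrow> (nat \<times> nat) set \<Rightarrow> (nat \<Rightarrow> nat list) \<Rightarrow> bool" where
  "planar_embedding n E rot \<longleftrightarrow> simple_graph n E \<and> rotation_system n E rot \<and>
     int n - int (card E) + int (num_faces E rot)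
       = 2 * int (num_edge_components n E) + int (num_isolated n E)"

definition ccw_order :: "complex list \<Rightarrow> bool" where
  "ccw_order vs \<longleftrightarrow> (\<exists>k. sorted_wrt (<) (map Arg (rotate k vs)))"

definition packing :: "nat \<Rightarrow> (nat \<times> nat) set \<Rightarrow> (nat \<Rightarrow> nat list) \<Rightarrow>
    (nat \<Rightarrow> complex) \<Rightarrow> (nat \<Rightarrow> real) \<Rightarrow> bool" where
  "packing n E rot c r \<longleftrightarrow>
     (\<forall>i<n. r i > 0) \<and>
     (\<forall>(i,j)\<in>E. (r i + r j)\<^sup>2 = (norm (c i - c j))\<^sup>2) \<and>
     (\<forall>i<n. ccw_order (map (\<lambda>j. c j - c i) (rot i)))"

definition partition4 :: "nat \<Rightarrow> nat set \<Rightarrow> nat set \<Rightarrow> nat set \<Rightarrow> nat set \<Rightarrow> bool" where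
  "partition4 n Vp Vm Ve V0 \<longleftrightarrow> Vp \<union> Vm \<union> Ve \<union> V0 = {..<n} \<and>
     Vp \<inter> Vm = {} \<and> Vp \<inter> Ve = {} \<and> Vp \<inter> V0 = {} \<and>
     Vm \<inter> Ve = {} \<and> Vm \<inter> V0 = {} \<and> Ve \<inter> V0 = {}"

definition inf_flex :: "(nat \<times> nat) set \<Rightarrow> (nat \<Rightarrow> complex) \<Rightarrow> (nat \<Rightarrow> real) \<Rightarrow>
    (nat \<Rightarrow> complex) \<Rightarrow> (nat \<Rightarrow> real) \<Rightarrow> bool" where
  "inf_flex E c r c' r' \<longleftrightarrow>
     (\<forall>(i,j)\<in>E. (c i - c j) \<bullet> (c' i - c' j) = (r i + r j) * (r' i + r' j))"

definition proper_flex :: "nat set \<Rightarrow> nat set \<Rightarrow> nat set \<Rightarrow> (nat \<Rightarrow> real) \<Rightarrow> bool" where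
  "proper_flex Vp Vm Ve r' \<longleftrightarrow>
     (\<forall>i\<in>Vp. r' i \<ge> 0) \<and> (\<forall>i\<in>Vm. r' i \<le> 0) \<and> (\<forall>i\<in>Ve. r' i = 0)"

(* derivative at t = 0 of a family of rigid motions (rotation + translation) starting at the identity *)
definition trivial_flex :: "nat \<Rightarrow> (nat \<Rightarrow> complex) \<Rightarrow> (nat \<Rightarrow> complex) \<Rightarrow> (nat \<Rightarrow> real) \<Rightarrow> bool" where
  "trivial_flex n c c' r' \<longleftrightarrow> (\<forall>i<n. r' i = 0) \<and>
     (\<exists>(\<theta>::real \<Rightarrow> real) (\<tau>::real \<Rightarrow> complex). \<theta> 0 = 0 \<and> \<tau> 0 = 0 \<and>
        (\<forall>i<n. ((\<lambda>t. cis (\<theta> t) * c i + \<tau> t) has_vector_derivative c' i) (at 0)))"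

definition tVp :: "nat set \<Rightarrow> (nat \<Rightarrow> real) \<Rightarrow> nat set" where
  "tVp Vp r' = {i \<in> Vp. r' i = 0}"
definition tVm :: "nat set \<Rightarrow> (nat \<Rightarrow> real) \<Rightarrow> nat set" where
  "tVm Vm r' = {i \<in> Vm. r' i = 0}"
definition tV0 :: "nat \<Rightarrow> nat set \<Rightarrow> nat set \<Rightarrow> nat set \<Rightarrow> (nat \<Rightarrow> real) \<Rightarrow> nat set" where
  "tV0 n Vp Vm Ve r' = {..<n} - (tVp Vp r' \<union> tVm Vm r' \<union> Ve)"

definition extendable :: "(nat \<times> nat) set \<Rightarrow> nat set \<Rightarrow> nat set \<Rightarrow> nat set \<Rightarrow>
    (nat \<Rightarrow> complex) \<Rightarrow> (nat \<Rightarrow> real) \<Rightarrow> (nat \<Rightarrow> complex) \<Rightarrow> (nat \<Rightarrow> real) \<Rightarrow> bool" where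
  "extendable E Vp Vm Ve c r c' r' \<longleftrightarrow>
     (\<exists>(c''::nat \<Rightarrow> complex) (r''::nat \<Rightarrow> real).
        (\<forall>(i,j)\<in>E. (c i - c j) \<bullet> (c'' i - c'' j) - (r i + r j) * (r'' i + r'' j)
                    = (r' i + r' j)\<^sup>2 - (c' i - c' j) \<bullet> (c' i - c' j)) \<and>
        (\<forall>i\<in>tVp Vp r'. r'' i \<ge> 0) \<and> (\<forall>i\<in>tVm Vm r'. r'' i \<le> 0) \<and> (\<forall>i\<in>Ve. r'' i = 0))"

definition second_order_rigid :: "nat \<Rightarrow> (nat \<times> nat) set \<Rightarrow> nat set \<Rightarrow> nat set \<Rightarrow> nat set \<Rightarrow>
    (nat \<Rightarrow> complex) \<Rightarrow> (nat \<Rightarrow> real) \<Rightarrow> bool" where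
  "second_order_rigid n E Vp Vm Ve c r \<longleftrightarrow>
     (\<forall>c' r'. inf_flex E c r c' r' \<and> proper_flex Vp Vm Ve r' \<and> \<not> trivial_flex n c c' r'
        \<longrightarrow> \<not> extendable E Vp Vm Ve c r c' r')"

(* stresses are functions on the (stored) edges; stress on the unordered pair {i,j} *)
definition sw :: "(nat \<times> nat \<Rightarrow> real) \<Rightarrow> nat \<Rightarrow> nat \<Rightarrow> real" where
  "sw \<omega> i j = \<omega> (min i j, max i j)"

definition equilibrium_stress :: "nat \<Rightarrow> (nat \<times> nat) set \<Rightarrow> (nat \<Rightarrow> complex) \<Rightarrow>
    (nat \<times> nat \<Rightarrow> real) \<Rightarrow> bool" where
  "equilibrium_stress n E c \<omega> \<longleftrightarrow>
     (\<forall>i<n. (\<Sum>j\<in>{j. j < n \<and> adj E i j}. sw \<omega> i j *\<^sub>R (c i - c j)) = 0)"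

definition radial_force :: "nat \<Rightarrow> (nat \<times> nat) set \<Rightarrow> (nat \<Rightarrow> real) \<Rightarrow>
    (nat \<times> nat \<Rightarrow> real) \<Rightarrow> nat \<Rightarrow> real" where
  "radial_force n E r \<omega> i = (\<Sum>j\<in>{j. j < n \<and> adj E i j}. sw \<omega> i j * (r i + r j))"

definition blocks :: "nat \<Rightarrow> (nat \<times> nat) set \<Rightarrow> nat set \<Rightarrow> nat set \<Rightarrow> nat set \<Rightarrow>
    (nat \<Rightarrow> complex) \<Rightarrow> (nat \<Rightarrow> real) \<Rightarrow> (nat \<times> nat \<Rightarrow> real) \<Rightarrow>
    (nat \<Rightarrow> complex) \<Rightarrow> (nat \<Rightarrow> real) \<Rightarrow> bool" where
  "blocks n E Vp Vm Ve c r \<omega> c' r' \<longleftrightarrow>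
     equilibrium_stress n E c \<omega> \<and>
     (\<forall>i\<in>tVm Vm r'. radial_force n E r \<omega> i \<ge> 0) \<and>
     (\<forall>i\<in>tVp Vp r'. radial_force n E r \<omega> i \<le> 0) \<and>
     (\<forall>i\<in>tV0 n Vp Vm Ve r'. radial_force n E r \<omega> i = 0) \<and>
     (\<Sum>(i,j)\<in>E. \<omega> (i,j) * ((c' i - c' j) \<bullet> (c' i - c' j) - (r' i + r' j)\<^sup>2)) > 0"

end

theory Submission
  imports Defs
begin

(* Second-order rigidity asks, for each nontrivial proper flex (c', r'), that the linear system
   L (c'', r'') = b on the edges be infeasible under the sign constraints on r'', where L is the
   rigidity map and b_ij = (r'_i + r'_j)^2 - |c'_i - c'_j|^2.  By Farkas' lemma this holds iff some
   edge weighting w has <w, b> < 0 and <w, L (C, R)> >= 0 for all sign-admissible (C, R).  The adjoint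
   of L sends w to the net forces at the centres and the radial force sums at the radii, so these are
   exactly the conditions for w to be an equilibrium stress blocking (c', r'). *)

definition inner_on :: "'e set \<Rightarrow> ('e \<Rightarrow> real) \<Rightarrow> ('e \<Rightarrow> real) \<Rightarrow> real" where
  "inner_on S y v = (\<Sum>e\<in>S. y e * v e)"

definition in_cone_on :: "'e set \<Rightarrow> 'k set \<Rightarrow> ('k \<Rightarrow> 'e \<Rightarrow> real) \<Rightarrow> ('e \<Rightarrow> real) \<Rightarrow> bool" where
  "in_cone_on S K a b \<longleftrightarrow> (\<exists>l. (\<forall>k\<in>K. 0 \<le> l k) \<and> (\<forall>e\<in>S. b e = (\<Sum>k\<in>K. l k * a k e)))"

lemma inner_on_diff_left:
  "inner_on S (\<lambda>e. p * u e - q * w e) v = p * inner_on S u v - q * inner_on S w v"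
  by (simp add: inner_on_def sum_subtractf sum_distrib_left algebra_simps)

lemma inner_on_diff_right:
  "inner_on S y (\<lambda>e. p * u e - q * w e) = p * inner_on S y u - q * inner_on S y w"
  by (simp add: inner_on_def sum_subtractf sum_distrib_left algebra_simps)

lemma in_cone_on_insert:
  assumes "in_cone_on S K a b" "k \<notin> K"
  shows "in_cone_on S (insert k K) a b"
proof -
  obtain l where l: "\<forall>j\<in>K. 0 \<le> l j" "\<forall>e\<in>S. b e = (\<Sum>j\<in>K. l j * a j e)"
    using assms unfolding in_cone_on_def by blast
  have "(\<Sum>j\<in>insert k K. (l(k := 0)) j * a j e) = (\<Sum>j\<in>K. l j * a j e)" for e
    using assms(2) by (cases "finite K") (auto intro!: sum.cong)
  then show ?thesis
    unfolding in_cone_on_def using l by (intro exI[of _ "l(k := 0)"]) auto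
qed

lemma farkas_lemma:
  assumes "finite S" "finite K" "\<not> in_cone_on S K a b"
  shows "\<exists>y. (\<forall>k\<in>K. 0 \<le> inner_on S y (a k)) \<and> inner_on S y b < 0"
  using assms(2,3)
proof (induction K arbitrary: a b rule: finite_induct)
  case empty
  then obtain e where "e \<in> S" "b e \<noteq> 0"
    by (auto simp: in_cone_on_def)
  then have "0 < (\<Sum>e\<in>S. b e * b e)"
    using assms(1) by (intro sum_pos2) (auto simp: zero_less_mult_iff)
  then have "inner_on S (\<lambda>e. - b e) b < 0"
    by (simp add: inner_on_def sum_negf)
  then show ?case by blast
next
  case (insert k K)
  have "\<not> in_cone_on S K a b"
    using in_cone_on_insert[OF _ insert.hyps(2)] insert.prems by metis
  from insert.IH[OF this]
  obtain y where y: "\<forall>j\<in>K. 0 \<le> inner_on S y (a j)" "inner_on S y b < 0"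
    by blast
  show ?case
  proof (cases "0 \<le> inner_on S y (a k)")
    case True
    with y show ?thesis by auto
  next
    case False
    define \<alpha> where "\<alpha> = inner_on S y (a k)"
    have "\<alpha> < 0" using False by (simp add: \<alpha>_def)
    \<comment> \<open>Fourier--Motzkin elimination of a k: up to the factor - \<alpha> > 0, f projects onto the
      kernel of y along a k.\<close>
    define f where "f v = (\<lambda>e. inner_on S y v * a k e - \<alpha> * v e)" for v
    have "\<not> in_cone_on S K (\<lambda>j. f (a j)) (f b)"
    proof
      assume "in_cone_on S K (\<lambda>j. f (a j)) (f b)"
      then obtain \<mu> where \<mu>: "\<forall>j\<in>K. 0 \<le> \<mu> j" "\<forall>e\<in>S. f b e = (\<Sum>j\<in>K. \<mu> j * f (a j) e)"
        unfolding in_cone_on_def by blast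
      define \<theta> where "\<theta> = ((\<Sum>j\<in>K. \<mu> j * inner_on S y (a j)) - inner_on S y b) / - \<alpha>"
      have "0 \<le> (\<Sum>j\<in>K. \<mu> j * inner_on S y (a j))"
        using y(1) \<mu>(1) by (simp add: sum_nonneg)
      with y(2) \<open>\<alpha> < 0\<close> have "0 \<le> \<theta>"
        unfolding \<theta>_def by (intro divide_nonneg_pos) auto
      have "b e = \<theta> * a k e + (\<Sum>j\<in>K. \<mu> j * a j e)" if "e \<in> S" for e
      proof -
        have "inner_on S y b * a k e - \<alpha> * b e
            = (\<Sum>j\<in>K. \<mu> j * inner_on S y (a j)) * a k e - \<alpha> * (\<Sum>j\<in>K. \<mu> j * a j e)"
          using \<mu>(2) that by (simp add: f_def sum_subtractf sum_distrib_left sum_distrib_right algebra_simps)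
        with \<open>\<alpha> < 0\<close> show ?thesis
          unfolding \<theta>_def by (simp add: field_simps)
      qed
      moreover have "(\<Sum>j\<in>insert k K. (\<mu>(k := \<theta>)) j * a j e) = \<theta> * a k e + (\<Sum>j\<in>K. \<mu> j * a j e)"
        for e
        using insert.hyps by (auto intro!: sum.cong)
      ultimately have "in_cone_on S (insert k K) a b"
        unfolding in_cone_on_def using \<mu>(1) \<open>0 \<le> \<theta>\<close> by (intro exI[of _ "\<mu>(k := \<theta>)"]) auto
      with insert.prems show False by contradiction
    qed
    from insert.IH[OF this]
    obtain y' where y': "\<forall>j\<in>K. 0 \<le> inner_on S y' (f (a j))" "inner_on S y' (f b) < 0"
      by blast
    define z where "z = (\<lambda>e. inner_on S y' (a k) * y e - \<alpha> * y' e)"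
    have z: "inner_on S z v = inner_on S y' (f v)" for v
      unfolding z_def f_def by (simp add: inner_on_diff_left inner_on_diff_right)
    have "inner_on S z (a k) = 0"
      unfolding z f_def \<alpha>_def by (simp add: inner_on_def)
    with y' show ?thesis
      by (intro exI[of _ z]) (simp add: z)
  qed
qed

lemma simple_graph_finite: "simple_graph n E \<Longrightarrow> finite E"
  unfolding simple_graph_def by (rule finite_subset[of _ "{..<n} \<times> {..<n}"]) auto

lemma darts_simple_graph:
  assumes "simple_graph n E"
  shows "darts E = E \<union> prod.swap ` E"
  using assms unfolding simple_graph_def darts_def adj_def by force

lemma simple_graph_swap_disjoint:
  assumes "simple_graph n E"
  shows "E \<inter> prod.swap ` E = {}"
proof -
  have "i < j" if "(i, j) \<in> E" for i j
    using assms that unfolding simple_graph_def by auto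
  then show ?thesis by (auto, meson less_asym)
qed

lemma sum_edges_eq_sum_neighbours:
  fixes g :: "nat \<Rightarrow> nat \<Rightarrow> 'a::comm_monoid_add"
  assumes "simple_graph n E"
  shows "(\<Sum>(i,j)\<in>E. g i j + g j i) = (\<Sum>i<n. \<Sum>j\<in>{j. j < n \<and> adj E i j}. g i j)"
proof -
  have fin: "finite E" using simple_graph_finite[OF assms] .
  have darts: "Sigma {..<n} (\<lambda>i. {j. j < n \<and> adj E i j}) = darts E"
    using assms unfolding simple_graph_def darts_def adj_def by auto
  have "(\<Sum>(i,j)\<in>E. g i j + g j i) = (\<Sum>(i,j)\<in>E. g i j) + (\<Sum>(i,j)\<in>prod.swap ` E. g i j)"
    by (simp add: sum.distrib sum.reindex case_prod_beta)
  also have "\<dots> = (\<Sum>(i,j)\<in>darts E. g i j)"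
    using darts_simple_graph[OF assms] simple_graph_swap_disjoint[OF assms] fin
    by (simp add: sum.union_disjoint)
  also have "\<dots> = (\<Sum>i<n. \<Sum>j\<in>{j. j < n \<and> adj E i j}. g i j)"
    unfolding darts[symmetric] by (rule sum.Sigma[symmetric]) auto
  finally show ?thesis .
qed

definition rigidity_map ::
    "(nat \<Rightarrow> complex) \<Rightarrow> (nat \<Rightarrow> real) \<Rightarrow> (nat \<Rightarrow> complex) \<Rightarrow> (nat \<Rightarrow> real) \<Rightarrow> nat \<times> nat \<Rightarrow> real" where
  "rigidity_map c r C R = (\<lambda>(i,j). (c i - c j) \<bullet> (C i - C j) - (r i + r j) * (R i + R j))"

definition net_force :: "nat \<Rightarrow> (nat \<times> nat) set \<Rightarrow> (nat \<Rightarrow> complex) \<Rightarrow> (nat \<times> nat \<Rightarrow> real) \<Rightarrow> nat \<Rightarrow> complex" where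
  "net_force n E c \<omega> i = (\<Sum>j\<in>{j. j < n \<and> adj E i j}. sw \<omega> i j *\<^sub>R (c i - c j))"

lemma equilibrium_stress_iff_net_force:
  "equilibrium_stress n E c \<omega> \<longleftrightarrow> (\<forall>i<n. net_force n E c \<omega> i = 0)"
  unfolding equilibrium_stress_def net_force_def ..

lemma rigidity_map_sum:
  "rigidity_map c r (\<lambda>m. \<Sum>k\<in>K. l k *\<^sub>R C k m) (\<lambda>m. \<Sum>k\<in>K. l k * R k m) e
     = (\<Sum>k\<in>K. l k * rigidity_map c r (C k) (R k) e)"
  by (simp add: rigidity_map_def case_prod_beta inner_sum_right sum_subtractf[symmetric]
      sum.distrib[symmetric] sum_distrib_left algebra_simps inner_diff_right)

lemma inner_on_rigidity_map:
  assumes "simple_graph n E"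
  shows "inner_on E \<omega> (rigidity_map c r C R)
    = (\<Sum>i<n. C i \<bullet> net_force n E c \<omega> i - R i * radial_force n E r \<omega> i)"
proof -
  define g where "g i j = sw \<omega> i j * ((c i - c j) \<bullet> C i - (r i + r j) * R i)" for i j
  have "\<omega> (i, j) * rigidity_map c r C R (i, j) = g i j + g j i" if "(i, j) \<in> E" for i j
  proof -
    have "i < j" using assms that unfolding simple_graph_def by auto
    then show ?thesis
      by (simp add: g_def rigidity_map_def sw_def inner_diff_left inner_diff_right inner_commute
          algebra_simps)
  qed
  then have "inner_on E \<omega> (rigidity_map c r C R) = (\<Sum>(i,j)\<in>E. g i j + g j i)"
    unfolding inner_on_def by (intro sum.cong) auto
  also have "\<dots> = (\<Sum>i<n. \<Sum>j\<in>{j. j < n \<and> adj E i j}. g i j)"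
    using sum_edges_eq_sum_neighbours[OF assms] .
  also have "\<dots> = (\<Sum>i<n. C i \<bullet> net_force n E c \<omega> i - R i * radial_force n E r \<omega> i)"
  proof (rule sum.cong[OF refl])
    fix i
    have "(\<Sum>j\<in>{j. j < n \<and> adj E i j}. g i j) = (\<Sum>j\<in>{j. j < n \<and> adj E i j}.
        C i \<bullet> (sw \<omega> i j *\<^sub>R (c i - c j)) - R i * (sw \<omega> i j * (r i + r j)))"
      by (intro sum.cong) (simp_all add: g_def inner_commute algebra_simps)
    then show "(\<Sum>j\<in>{j. j < n \<and> adj E i j}. g i j)
        = C i \<bullet> net_force n E c \<omega> i - R i * radial_force n E r \<omega> i"
      by (simp add: net_force_def radial_force_def inner_sum_right sum_distrib_left sum_subtractf)
  qed
  finally show ?thesis .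
qed

definition second_order_rhs :: "(nat \<Rightarrow> complex) \<Rightarrow> (nat \<Rightarrow> real) \<Rightarrow> nat \<times> nat \<Rightarrow> real" where
  "second_order_rhs c' r' = (\<lambda>(i,j). (r' i + r' j)\<^sup>2 - (c' i - c' j) \<bullet> (c' i - c' j))"

definition admissible_radius :: "nat set \<Rightarrow> nat set \<Rightarrow> nat set \<Rightarrow> (nat \<Rightarrow> real) \<Rightarrow> nat \<Rightarrow> real \<Rightarrow> bool" where
  "admissible_radius Vp Vm Ve r' i s \<longleftrightarrow>
     (i \<in> tVp Vp r' \<longrightarrow> 0 \<le> s) \<and> (i \<in> tVm Vm r' \<longrightarrow> s \<le> 0) \<and> (i \<in> Ve \<longrightarrow> s = 0)"

lemma extendable_iff_rigidity_map:
  "extendable E Vp Vm Ve c r c' r' \<longleftrightarrow>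
     (\<exists>C R. (\<forall>e\<in>E. rigidity_map c r C R e = second_order_rhs c' r' e) \<and>
        (\<forall>i. admissible_radius Vp Vm Ve r' i (R i)))"
  unfolding extendable_def rigidity_map_def second_order_rhs_def admissible_radius_def by fast

lemma blocking_sum_eq_inner_on:
  "(\<Sum>(i,j)\<in>E. \<omega> (i,j) * ((c' i - c' j) \<bullet> (c' i - c' j) - (r' i + r' j)\<^sup>2))
     = - inner_on E \<omega> (second_order_rhs c' r')"
  unfolding inner_on_def second_order_rhs_def
  by (simp add: case_prod_beta sum_negf[symmetric] algebra_simps)

lemma admissible_radius_zero: "admissible_radius Vp Vm Ve r' i 0"
  unfolding admissible_radius_def by simp

lemma admissible_radius_sum:
  assumes "\<And>k. k \<in> K \<Longrightarrow> 0 \<le> l k \<and> admissible_radius Vp Vm Ve r' i (s k)"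
  shows "admissible_radius Vp Vm Ve r' i (\<Sum>k\<in>K. l k * s k)"
  using assms unfolding admissible_radius_def
  by (auto intro!: sum_nonneg sum_nonpos sum.neutral simp: mult_nonneg_nonpos)

lemma blocks_admissible_radial_force_nonpos:
  assumes "blocks n E Vp Vm Ve c r \<omega> c' r'" "i < n" "admissible_radius Vp Vm Ve r' i s"
  shows "s * radial_force n E r \<omega> i \<le> 0"
proof -
  have "i \<in> tVp Vp r' \<or> i \<in> tVm Vm r' \<or> i \<in> Ve \<or> i \<in> tV0 n Vp Vm Ve r'"
    using assms(2) unfolding tV0_def by auto
  then show ?thesis
    using assms(1,3) unfolding blocks_def admissible_radius_def
    by (auto simp: mult_nonneg_nonpos mult_nonpos_nonneg)
qed

lemma radial_force_signs_if_unit_tests: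
  assumes "partition4 n Vp Vm Ve V0"
    and "\<And>s. s \<in> {1, -1} \<Longrightarrow> admissible_radius Vp Vm Ve r' i s \<Longrightarrow> s * \<rho> \<le> 0"
  shows "(i \<in> tVm Vm r' \<longrightarrow> 0 \<le> \<rho>) \<and> (i \<in> tVp Vp r' \<longrightarrow> \<rho> \<le> 0) \<and>
    (i \<in> tV0 n Vp Vm Ve r' \<longrightarrow> \<rho> = 0)"
proof -
  have "tVp Vp r' \<inter> tVm Vm r' = {}" "tVp Vp r' \<inter> Ve = {}" "tVm Vm r' \<inter> Ve = {}"
    using assms(1) unfolding partition4_def tVp_def tVm_def by blast+
  then show ?thesis
    using assms(2)[of 1] assms(2)[of "-1"] unfolding admissible_radius_def tV0_def by auto
qed

lemma complex_eq_0_if_inner_units_nonneg: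
  fixes z :: complex
  assumes "\<And>u. u \<in> {1, -1, \<i>, -\<i>} \<Longrightarrow> 0 \<le> u \<bullet> z"
  shows "z = 0"
  using assms[of 1] assms[of "-1"] assms[of "\<i>"] assms[of "-\<i>"]
  by (simp add: complex_eq_iff inner_complex_def)

lemma blocks_imp_not_extendable:
  assumes "simple_graph n E" and "blocks n E Vp Vm Ve c r \<omega> c' r'"
  shows "\<not> extendable E Vp Vm Ve c r c' r'"
proof
  assume "extendable E Vp Vm Ve c r c' r'"
  then obtain C R where CR: "\<forall>e\<in>E. rigidity_map c r C R e = second_order_rhs c' r' e"
      "\<forall>i. admissible_radius Vp Vm Ve r' i (R i)"
    unfolding extendable_iff_rigidity_map by blast
  have equilibrium: "net_force n E c \<omega> i = 0" if "i < n" for i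
    using assms(2) that unfolding blocks_def equilibrium_stress_iff_net_force by blast
  have "inner_on E \<omega> (second_order_rhs c' r') = inner_on E \<omega> (rigidity_map c r C R)"
    unfolding inner_on_def using CR(1) by (intro sum.cong) auto
  also have "\<dots> = (\<Sum>i<n. - (R i * radial_force n E r \<omega> i))"
    unfolding inner_on_rigidity_map[OF assms(1)] by (simp add: equilibrium)
  also have "\<dots> \<ge> 0"
    using blocks_admissible_radial_force_nonpos[OF assms(2) _ CR(2)[rule_format]]
    by (intro sum_nonneg) (simp add: neg_le_0_iff_le)
  finally show False
    using assms(2) unfolding blocks_def blocking_sum_eq_inner_on by simp
qed

\<comment> \<open>Unit moves of a single centre and admissible unit changes of a single radius: their cone
  is the image under the rigidity map of all (C, R) with admissible R.\<close>
definition unit_moves ::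
    "nat \<Rightarrow> nat set \<Rightarrow> nat set \<Rightarrow> nat set \<Rightarrow> (nat \<Rightarrow> real) \<Rightarrow> (nat \<times> complex \<times> real) set" where
  "unit_moves n Vp Vm Ve r' = {(i, z, s). i < n \<and> (z \<in> {1, -1, \<i>, -\<i>} \<and> s = 0 \<or>
      z = 0 \<and> s \<in> {1, -1} \<and> admissible_radius Vp Vm Ve r' i s)}"

definition rigidity_map_move ::
    "(nat \<Rightarrow> complex) \<Rightarrow> (nat \<Rightarrow> real) \<Rightarrow> nat \<times> complex \<times> real \<Rightarrow> nat \<times> nat \<Rightarrow> real" where
  "rigidity_map_move c r = (\<lambda>(i, z, s).
     rigidity_map c r (\<lambda>m. if m = i then z else 0) (\<lambda>m. if m = i then s else 0))"

lemma finite_unit_moves: "finite (unit_moves n Vp Vm Ve r')"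
  by (rule finite_subset[of _ "{..<n} \<times> {1, -1, \<i>, -\<i>, 0} \<times> {0, 1, -1}"])
    (auto simp: unit_moves_def)

lemma extendable_if_in_cone_unit_moves:
  assumes "in_cone_on E (unit_moves n Vp Vm Ve r') (rigidity_map_move c r) (second_order_rhs c' r')"
  shows "extendable E Vp Vm Ve c r c' r'"
proof -
  let ?K = "unit_moves n Vp Vm Ve r'"
  obtain l where l: "\<forall>k\<in>?K. 0 \<le> l k"
      "\<forall>e\<in>E. second_order_rhs c' r' e = (\<Sum>k\<in>?K. l k * rigidity_map_move c r k e)"
    using assms unfolding in_cone_on_def by blast
  define C where "C = (\<lambda>m. \<Sum>k\<in>?K. l k *\<^sub>R (if m = fst k then fst (snd k) else 0))"
  define R where "R = (\<lambda>m. \<Sum>k\<in>?K. l k * (if m = fst k then snd (snd k) else 0))"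
  have "\<forall>e\<in>E. rigidity_map c r C R e = second_order_rhs c' r' e"
    using l(2) unfolding C_def R_def rigidity_map_sum
    by (simp add: rigidity_map_move_def case_prod_beta)
  moreover have "admissible_radius Vp Vm Ve r' i (R i)" for i
    unfolding R_def using l(1)
    by (intro admissible_radius_sum) (auto simp: unit_moves_def admissible_radius_zero)
  ultimately show ?thesis
    unfolding extendable_iff_rigidity_map by blast
qed

lemma inner_on_rigidity_map_move:
  assumes "simple_graph n E" "i < n"
  shows "inner_on E \<omega> (rigidity_map_move c r (i, z, s))
    = z \<bullet> net_force n E c \<omega> i - s * radial_force n E r \<omega> i"
proof -
  have "inner_on E \<omega> (rigidity_map_move c r (i, z, s)) = (\<Sum>m<n. if m = i
      then z \<bullet> net_force n E c \<omega> m - s * radial_force n E r \<omega> m else 0)"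
    unfolding rigidity_map_move_def prod.case inner_on_rigidity_map[OF assms(1)]
    by (intro sum.cong) auto
  with assms(2) show ?thesis by simp
qed

lemma not_extendable_imp_blocks:
  assumes "simple_graph n E" and "partition4 n Vp Vm Ve V0"
    and "\<not> extendable E Vp Vm Ve c r c' r'"
  shows "\<exists>\<omega>. blocks n E Vp Vm Ve c r \<omega> c' r'"
proof -
  let ?K = "unit_moves n Vp Vm Ve r'"
  obtain \<omega> where \<omega>: "\<forall>k\<in>?K. 0 \<le> inner_on E \<omega> (rigidity_map_move c r k)"
      "inner_on E \<omega> (second_order_rhs c' r') < 0"
    using farkas_lemma[OF simple_graph_finite[OF assms(1)] finite_unit_moves]
      extendable_if_in_cone_unit_moves assms(3) by blast
  have "0 \<le> u \<bullet> net_force n E c \<omega> i" if "i < n" "u \<in> {1, -1, \<i>, -\<i>}" for i u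
  proof -
    have "(i, u, 0) \<in> ?K" using that unfolding unit_moves_def by simp
    with \<omega>(1) inner_on_rigidity_map_move[OF assms(1) that(1)] show ?thesis by fastforce
  qed
  then have "net_force n E c \<omega> i = 0" if "i < n" for i
    using that by (intro complex_eq_0_if_inner_units_nonneg)
  moreover have "s * radial_force n E r \<omega> i \<le> 0"
    if "i < n" "s \<in> {1, -1}" "admissible_radius Vp Vm Ve r' i s" for i s
  proof -
    have "(i, 0, s) \<in> ?K" using that unfolding unit_moves_def by simp
    with \<omega>(1) inner_on_rigidity_map_move[OF assms(1) that(1)] show ?thesis by fastforce
  qed
  then have "(i \<in> tVm Vm r' \<longrightarrow> 0 \<le> radial_force n E r \<omega> i) \<and>
      (i \<in> tVp Vp r' \<longrightarrow> radial_force n E r \<omega> i \<le> 0) \<and>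
      (i \<in> tV0 n Vp Vm Ve r' \<longrightarrow> radial_force n E r \<omega> i = 0)" if "i < n" for i
    using that by (intro radial_force_signs_if_unit_tests[OF assms(2)])
  moreover have "i < n" if "i \<in> tVm Vm r' \<or> i \<in> tVp Vp r' \<or> i \<in> tV0 n Vp Vm Ve r'" for i
    using assms(2) that unfolding partition4_def tVm_def tVp_def tV0_def by auto
  ultimately have "blocks n E Vp Vm Ve c r \<omega> c' r'"
    using \<omega>(2) unfolding blocks_def equilibrium_stress_iff_net_force blocking_sum_eq_inner_on
    by auto
  then show ?thesis by blast
qed

theorem mainTheorem10:
  fixes n :: nat and E :: "(nat \<times> nat) set" and rot :: "nat \<Rightarrow> nat list"
    and c :: "nat \<Rightarrow> complex" and r :: "nat \<Rightarrow> real"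
    and Vp Vm Ve V0 :: "nat set"
  assumes "planar_embedding n E rot"
    and "packing n E rot c r"
    and "partition4 n Vp Vm Ve V0"
  shows "second_order_rigid n E Vp Vm Ve c r \<longleftrightarrow>
    (\<forall>c' r'. inf_flex E c r c' r' \<and> proper_flex Vp Vm Ve r' \<and> \<not> trivial_flex n c c' r'
       \<longrightarrow> (\<exists>\<omega>. blocks n E Vp Vm Ve c r \<omega> c' r'))"
proof -
  have "simple_graph n E"
    using assms(1) unfolding planar_embedding_def by blast
  then have "\<not> extendable E Vp Vm Ve c r c' r' \<longleftrightarrow> (\<exists>\<omega>. blocks n E Vp Vm Ve c r \<omega> c' r')"
    for c' r'
    using blocks_imp_not_extendable not_extendable_imp_blocks[OF _ assms(3)] by blast
  then show ?thesis
    unfolding second_order_rigid_def by blast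
qed

end
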